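(* Let $f\colon\{0,1\}^n\to\{0,1\}^n$ and $F(x,i)=f(x)_{1,\ldots,i-1}$ on $\{0,1\}^n\times[n]$. Let $A^*$ be the randomized algorithm that on input $(x,i)$ outputs a uniformly random $x'\in\{0,1\}^n$ with $f(x')_{1,\ldots,i-1}=f(x)_{1,\ldots,i-1}$. Consider the oracle algorithm $\mathrm{ExtendOne}^{C}(x,b,i)$: set $j:=0$; repeat { $x':=C(x,i)$ with fresh randomness; $j:=j+1$ } until $f(x')_i=b$; return $(x',j)$. Consider the oracle algorithm $\mathrm{Inv}^{C}(y)$ for $y\in\{0,1\}^n$: choose $x^{(0)}$ uniformly in $\{0,1\}^n$; for $i=1$ to $n$ let $(x^{(i)},j):=\mathrm{ExtendOne}^{C}(x^{(i-1)},y_i,i)$; return $x^{(n)}$. Then the expected number of calls to $A^*$ in a random execution of $\mathrm{Inv}^{A^*}(y)$ with $y=f(x)$ for $x$ uniform in $\{0,1\}^n$ is at most $2n$.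
   Context: $y_i$ denotes the $i$-th bit of $y$ and $y_{1,\ldots,i}$ its first $i$ bits. *)

theory Defs
  imports "HOL-Probability.Probability"
begin

text \<open>Bit strings of length n are bool lists of length n; bit k (1-based) of y is y ! (k-1),
  and the first k bits are take k y.\<close>

definition bitstrings :: "nat \<Rightarrow> bool list set" where
  "bitstrings n = {x. length x = n}"

definition A_star :: "nat \<Rightarrow> (bool list \<Rightarrow> bool list) \<Rightarrow> bool list \<Rightarrow> nat \<Rightarrow> bool list spmf" where
  "A_star n f x i = spmf_of_set {x' \<in> bitstrings n. take (i - 1) (f x') = take (i - 1) (f x)}"

text \<open>The repeat loop of ExtendOne^C(x,b,i), j = number of oracle calls so far.\<close>
partial_function (spmf) extend_loop ::
  "(bool list \<Rightarrow> bool list) \<Rightarrow> (bool list \<Rightarrow> nat \<Rightarrow> bool list spmf) \<Rightarrow> bool list \<Rightarrow> bool \<Rightarrow> nat \<Rightarrow> nat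
   \<Rightarrow> (bool list \<times> nat) spmf" where
  "extend_loop f C x b i j =
     bind_spmf (C x i) (\<lambda>x'. if f x' ! (i - 1) = b then return_spmf (x', Suc j)
                              else extend_loop f C x b i (Suc j))"

definition extend_one ::
  "(bool list \<Rightarrow> bool list) \<Rightarrow> (bool list \<Rightarrow> nat \<Rightarrow> bool list spmf) \<Rightarrow> bool list \<Rightarrow> bool \<Rightarrow> nat
   \<Rightarrow> (bool list \<times> nat) spmf" where
  "extend_one f C x b i = extend_loop f C x b i 0"

text \<open>First k iterations of Inv^C(y): returns (x^(k), total number of oracle calls so far).\<close>
primrec inv_iter ::
  "nat \<Rightarrow> (bool list \<Rightarrow> bool list) \<Rightarrow> (bool list \<Rightarrow> nat \<Rightarrow> bool list spmf) \<Rightarrow> bool list \<Rightarrow> nat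
   \<Rightarrow> (bool list \<times> nat) spmf" where
  "inv_iter n f C y 0 = map_spmf (\<lambda>x. (x, 0)) (spmf_of_set (bitstrings n))"
| "inv_iter n f C y (Suc k) =
     bind_spmf (inv_iter n f C y k) (\<lambda>(x, c).
       bind_spmf (extend_one f C x (y ! k) (Suc k)) (\<lambda>(x', j). return_spmf (x', c + j)))"

definition inv_alg ::
  "nat \<Rightarrow> (bool list \<Rightarrow> bool list) \<Rightarrow> (bool list \<Rightarrow> nat \<Rightarrow> bool list spmf) \<Rightarrow> bool list
   \<Rightarrow> (bool list \<times> nat) spmf" where
  "inv_alg n f C y = inv_iter n f C y n"

definition inv_experiment :: "nat \<Rightarrow> (bool list \<Rightarrow> bool list) \<Rightarrow> (bool list \<times> nat) spmf" where
  "inv_experiment n f = bind_spmf (spmf_of_set (bitstrings n)) (\<lambda>x. inv_alg n f (A_star n f) (f x))"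

end

theory Submission
  imports Defs
begin

(* In round i the oracle A* samples uniformly from the fibre F(i-1) of x |-> f(x)_{1..i-1}
   through y, and ExtendOne succeeds exactly on the subfibre F(i); so ExtendOne is a geometric
   retry loop and makes |F(i-1)| / |F(i)| calls in expectation. For y = f(x) with x uniform,
   the fibres F(i-1) partition {0,1}^n and each of them splits into at most two fibres F(i),
   so the average of |F(i-1)| / |F(i)| over x is at most 2. Summing over the n rounds gives 2n. *)

lemma nn_integral_bind_spmf:
  "(\<integral>\<^sup>+x. g x \<partial>measure_spmf (bind_spmf p h)) = (\<integral>\<^sup>+a. (\<integral>\<^sup>+x. g x \<partial>measure_spmf (h a)) \<partial>measure_spmf p)"
  by (simp add: measure_spmf_bind o_def nn_integral_bind[where B="count_space UNIV"] measurable_spmf_measure1)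

lemma nn_integral_return_spmf: "(\<integral>\<^sup>+x. g x \<partial>measure_spmf (return_spmf a)) = g a"
  by (simp add: measure_spmf_return_spmf nn_integral_return)

(* L j is the loop after j failed trials: it returns the first successful trial together with
   the total number of trials. *)
locale retry_loop =
  fixes p :: "'a spmf" and P :: "'a \<Rightarrow> bool" and L :: "nat \<Rightarrow> ('a \<times> nat) spmf"
  assumes lossless_trial: "lossless_spmf p"
    and success_prob_pos: "0 < measure (measure_spmf p) {x. P x}"
    and L_unfold: "L j = bind_spmf p (\<lambda>x. if P x then return_spmf (x, Suc j) else L (Suc j))"
begin

abbreviation success_prob :: real where
  "success_prob \<equiv> measure (measure_spmf p) {x. P x}"

abbreviation successes :: "('a \<times> nat) set" where
  "successes \<equiv> {r. fst r \<in> set_spmf p \<and> P (fst r)}"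

lemma success_prob_le_1: "success_prob \<le> 1"
  by (rule measure_spmf.subprob_measure_le_1)

lemma nn_integral_if_success:
  assumes "0 \<le> a" "0 \<le> c"
  shows "(\<integral>\<^sup>+x. (if P x then ennreal a else ennreal c) \<partial>measure_spmf p)
    = ennreal (a * success_prob + c * (1 - success_prob))"
proof -
  have failure: "measure (measure_spmf p) {x. \<not> P x} = 1 - success_prob"
    using lossless_trial measure_spmf.finite_measure_Diff[of UNIV p "{x. P x}"]
    by (simp add: lossless_spmf_def weight_spmf_def set_diff_eq)
  have "(\<integral>\<^sup>+x. (if P x then ennreal a else ennreal c) \<partial>measure_spmf p)
      = (\<integral>\<^sup>+x. ennreal a * indicator {x. P x} x + ennreal c * indicator {x. \<not> P x} x \<partial>measure_spmf p)"
    by (intro nn_integral_cong) (simp split: split_indicator)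
  also have "\<dots> = ennreal a * success_prob + ennreal c * (1 - success_prob)"
    by (simp add: nn_integral_add nn_integral_cmult_indicator measure_spmf.emeasure_eq_measure failure)
  also have "\<dots> = ennreal (a * success_prob + c * (1 - success_prob))"
    using assms success_prob_le_1 by (simp add: ennreal_mult ennreal_plus)
  finally show ?thesis .
qed

lemma nn_integral_L_unfold:
  "(\<integral>\<^sup>+r. g r \<partial>measure_spmf (L j))
    = (\<integral>\<^sup>+x. (if P x then g (x, Suc j) else \<integral>\<^sup>+r. g r \<partial>measure_spmf (L (Suc j))) \<partial>measure_spmf p)"
  by (subst L_unfold) (auto simp: nn_integral_bind_spmf nn_integral_return_spmf intro!: nn_integral_cong)

lemma success_mass_unfold:
  "measure (measure_spmf (L j)) successes
    = success_prob + (1 - success_prob) * measure (measure_spmf (L (Suc j))) successes"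
proof -
  let ?m = "\<lambda>j. measure (measure_spmf (L j)) successes"
  have "ennreal (?m j) = (\<integral>\<^sup>+r. indicator successes r \<partial>measure_spmf (L j))"
    by (simp add: measure_spmf.emeasure_eq_measure)
  also have "\<dots> = (\<integral>\<^sup>+x. (if P x then ennreal 1 else ennreal (?m (Suc j))) \<partial>measure_spmf p)"
    by (subst nn_integral_L_unfold, intro nn_integral_cong_AE)
       (simp add: measure_spmf.emeasure_eq_measure)
  also have "\<dots> = ennreal (success_prob + (1 - success_prob) * ?m (Suc j))"
    by (simp add: nn_integral_if_success mult.commute)
  finally show ?thesis
    using success_prob_le_1 by (simp add: ennreal_inj del: ennreal_plus)
qed

lemma success_mass_ge: "1 \<le> measure (measure_spmf (L j)) successes + (1 - success_prob) ^ m"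
proof (induction m arbitrary: j)
  case (Suc m)
  have "1 \<le> success_prob + (1 - success_prob) * (measure (measure_spmf (L (Suc j))) successes + (1 - success_prob) ^ m)"
    using mult_left_mono[OF Suc.IH[of "Suc j"], of "1 - success_prob"] success_prob_le_1 by simp
  then show ?case
    by (simp add: success_mass_unfold[of j] algebra_simps)
qed simp

lemma success_mass_eq_1: "measure (measure_spmf (L j)) successes = 1"
proof (rule antisym)
  have "(\<lambda>m. measure (measure_spmf (L j)) successes + (1 - success_prob) ^ m)
      \<longlonglongrightarrow> measure (measure_spmf (L j)) successes + 0"
    using success_prob_pos success_prob_le_1 by (intro tendsto_add tendsto_const LIMSEQ_power_zero) simp
  then show "1 \<le> measure (measure_spmf (L j)) successes"
    using success_mass_ge by (simp add: LIMSEQ_le_const)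
qed (rule measure_spmf.subprob_measure_le_1)

lemma lossless_L: "lossless_spmf (L j)"
proof -
  have "measure (measure_spmf (L j)) successes \<le> weight_spmf (L j)"
    unfolding weight_spmf_def by (rule measure_spmf.finite_measure_mono) simp_all
  then show ?thesis
    using success_mass_eq_1 weight_spmf_le_1[of "L j"] by (simp add: lossless_spmf_def)
qed

lemma set_spmf_L: "set_spmf (L j) \<subseteq> successes"
proof -
  interpret prob_space "measure_spmf (L j)"
    using lossless_L[of j]
    by (intro prob_spaceI) (simp add: lossless_spmf_def weight_spmf_def measure_spmf.emeasure_eq_measure)
  have "AE r in measure_spmf (L j). r \<in> successes"
    using success_mass_eq_1 by (intro AE_prob_1) simp
  then show ?thesis by auto
qed

(* The unfolding equation alone does not bound the expected count, which could a priori be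
   infinite; the count truncated at j + m can be bounded by induction on m. *)
lemma nn_integral_truncated_count_le:
  "(\<integral>\<^sup>+r. ennreal (real (min (snd r) (j + m))) \<partial>measure_spmf (L j))
    \<le> ennreal (real j + 1 / success_prob)"
proof (induction m arbitrary: j)
  case 0
  have "(\<integral>\<^sup>+r. ennreal (real (min (snd r) (j + 0))) \<partial>measure_spmf (L j))
      \<le> (\<integral>\<^sup>+r. ennreal (real j) \<partial>measure_spmf (L j))"
    by (intro nn_integral_mono) simp
  also have "\<dots> = ennreal (real j)"
    using lossless_L[of j] by (simp add: lossless_spmf_def weight_spmf_def measure_spmf.emeasure_eq_measure)
  also have "\<dots> \<le> ennreal (real j + 1 / success_prob)"
    using success_prob_pos by (intro ennreal_leI) simp
  finally show ?case .
next
  case (Suc m)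
  let ?q = success_prob
  have "(\<integral>\<^sup>+r. ennreal (real (min (snd r) (j + Suc m))) \<partial>measure_spmf (L j))
      = (\<integral>\<^sup>+x. (if P x then ennreal (real (Suc j))
           else \<integral>\<^sup>+r. ennreal (real (min (snd r) (Suc j + m))) \<partial>measure_spmf (L (Suc j))) \<partial>measure_spmf p)"
    by (subst nn_integral_L_unfold) (auto intro!: nn_integral_cong)
  also have "\<dots> \<le> (\<integral>\<^sup>+x. (if P x then ennreal (real (Suc j)) else ennreal (real (Suc j) + 1 / ?q)) \<partial>measure_spmf p)"
    using Suc.IH[of "Suc j"] by (intro nn_integral_mono) (simp del: of_nat_Suc ennreal_plus)
  also have "\<dots> = ennreal (real (Suc j) * ?q + (real (Suc j) + 1 / ?q) * (1 - ?q))"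
    using success_prob_pos by (intro nn_integral_if_success) simp_all
  also have "real (Suc j) * ?q + (real (Suc j) + 1 / ?q) * (1 - ?q) = real j + 1 / ?q"
    using success_prob_pos by (simp add: field_simps)
  finally show ?case .
qed

lemma nn_integral_count_le:
  "(\<integral>\<^sup>+r. ennreal (real (snd r)) \<partial>measure_spmf (L j)) \<le> ennreal (real j + 1 / success_prob)"
proof -
  have truncations: "ennreal (real (snd r)) = (SUP m. ennreal (real (min (snd r) (j + m))))" for r :: "'a \<times> nat"
  proof (rule antisym)
    show "ennreal (real (snd r)) \<le> (SUP m. ennreal (real (min (snd r) (j + m))))"
      by (rule SUP_upper2[where i="snd r"]) simp_all
  qed (rule SUP_least, simp)
  have "(\<integral>\<^sup>+r. ennreal (real (snd r)) \<partial>measure_spmf (L j))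
      = (\<integral>\<^sup>+r. (SUP m. ennreal (real (min (snd r) (j + m)))) \<partial>measure_spmf (L j))"
    by (simp only: truncations)
  also have "\<dots> = (SUP m. \<integral>\<^sup>+r. ennreal (real (min (snd r) (j + m))) \<partial>measure_spmf (L j))"
    by (rule nn_integral_monotone_convergence_SUP) (auto simp: incseq_def le_fun_def)
  also have "\<dots> \<le> ennreal (real j + 1 / success_prob)"
    by (intro SUP_least nn_integral_truncated_count_le)
  finally show ?thesis .
qed

end

lemma retry_loop_extend_loop:
  assumes "lossless_spmf (C x i)" and "0 < measure (measure_spmf (C x i)) {x'. f x' ! (i - 1) = b}"
  shows "retry_loop (C x i) (\<lambda>x'. f x' ! (i - 1) = b) (extend_loop f C x b i)"
  by (unfold_locales, rule assms(1), rule assms(2), rule extend_loop.simps)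

definition bind_count :: "('a \<times> nat) spmf \<Rightarrow> ('a \<Rightarrow> ('b \<times> nat) spmf) \<Rightarrow> ('b \<times> nat) spmf" where
  "bind_count I E = bind_spmf I (\<lambda>(x, c). bind_spmf (E x) (\<lambda>(x', j). return_spmf (x', c + j)))"

lemma lossless_bind_count:
  assumes "lossless_spmf I" and "fst ` set_spmf I \<subseteq> S" and "\<And>x. x \<in> S \<Longrightarrow> lossless_spmf (E x)"
  shows "lossless_spmf (bind_count I E)"
  using assms by (force simp: bind_count_def split_beta)

lemma set_bind_count_subset:
  assumes "fst ` set_spmf I \<subseteq> S" and "\<And>x. x \<in> S \<Longrightarrow> fst ` set_spmf (E x) \<subseteq> S'"
  shows "fst ` set_spmf (bind_count I E) \<subseteq> S'"
  using assms by (force simp: bind_count_def set_bind_spmf split_beta)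

lemma nn_integral_bind_count_le:
  assumes "fst ` set_spmf I \<subseteq> S"
    and "\<And>x. x \<in> S \<Longrightarrow> (\<integral>\<^sup>+r. ennreal (real (snd r)) \<partial>measure_spmf (E x)) \<le> \<beta>"
  shows "(\<integral>\<^sup>+r. ennreal (real (snd r)) \<partial>measure_spmf (bind_count I E))
    \<le> (\<integral>\<^sup>+r. ennreal (real (snd r)) \<partial>measure_spmf I) + \<beta>"
proof -
  have phase: "(\<integral>\<^sup>+r. ennreal (real (c + snd r)) \<partial>measure_spmf (E x)) \<le> ennreal (real c) + \<beta>"
    if "x \<in> S" for x c
  proof -
    have "(\<integral>\<^sup>+r. ennreal (real (c + snd r)) \<partial>measure_spmf (E x))
        = (\<integral>\<^sup>+r. ennreal (real c) \<partial>measure_spmf (E x)) + (\<integral>\<^sup>+r. ennreal (real (snd r)) \<partial>measure_spmf (E x))"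
      by (simp add: nn_integral_add)
    also have "\<dots> \<le> ennreal (real c) + \<beta>"
      by (intro add_mono[OF _ assms(2)[OF that]] measure_spmf.nn_integral_le_const) auto
    finally show ?thesis .
  qed
  have "(\<integral>\<^sup>+r. ennreal (real (snd r)) \<partial>measure_spmf (bind_count I E))
      = (\<integral>\<^sup>+a. \<integral>\<^sup>+r. ennreal (real (snd a + snd r)) \<partial>measure_spmf (E (fst a)) \<partial>measure_spmf I)"
    by (simp add: bind_count_def nn_integral_bind_spmf nn_integral_return_spmf split_beta)
  also have "\<dots> \<le> (\<integral>\<^sup>+a. ennreal (real (snd a)) + \<beta> \<partial>measure_spmf I)"
    using assms(1) phase by (intro nn_integral_mono_AE) auto
  also have "\<dots> = (\<integral>\<^sup>+r. ennreal (real (snd r)) \<partial>measure_spmf I) + (\<integral>\<^sup>+a. \<beta> \<partial>measure_spmf I)"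
    by (rule nn_integral_add) simp_all
  also have "\<dots> \<le> (\<integral>\<^sup>+r. ennreal (real (snd r)) \<partial>measure_spmf I) + \<beta>"
    by (intro add_left_mono measure_spmf.nn_integral_le_const) auto
  finally show ?thesis .
qed

lemma sum_inverse_card_fibres:
  assumes "finite A"
  shows "(\<Sum>x\<in>A. 1 / real (card {y \<in> A. v y = v x})) = real (card (v ` A))"
proof -
  have "(\<Sum>x\<in>A. 1 / real (card {y \<in> A. v y = v x}))
      = (\<Sum>c\<in>v ` A. \<Sum>x\<in>{x \<in> A. v x = c}. 1 / real (card {y \<in> A. v y = c}))"
    using assms by (subst sum.image_gen[where g = v]) (auto intro!: sum.cong)
  also have "\<dots> = (\<Sum>c\<in>v ` A. 1)"
    using assms by (intro sum.cong) (auto simp: card_gt_0_iff)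
  finally show ?thesis by simp
qed

lemma sum_card_fibre_ratio_le:
  fixes u :: "'a \<Rightarrow> 'k" and v :: "'a \<Rightarrow> 'c::finite"
  assumes "finite B"
  shows "(\<Sum>x\<in>B. real (card {y \<in> B. u y = u x}) / real (card {y \<in> B. u y = u x \<and> v y = v x}))
    \<le> real CARD('c) * real (card B)"
proof -
  define U where "U k = {x \<in> B. u x = k}" for k
  have finite_U: "finite (U k)" for k
    using assms by (simp add: U_def)
  have "(\<Sum>x\<in>B. real (card {y \<in> B. u y = u x}) / real (card {y \<in> B. u y = u x \<and> v y = v x}))
      = (\<Sum>k\<in>u ` B. \<Sum>x\<in>U k. real (card (U k)) * (1 / real (card {y \<in> U k. v y = v x})))"
    using assms unfolding U_def by (subst sum.image_gen[where g = u]) (auto intro!: sum.cong arg_cong[where f = card])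
  also have "\<dots> = (\<Sum>k\<in>u ` B. real (card (U k)) * real (card (v ` U k)))"
    by (simp only: sum_distrib_left[symmetric] sum_inverse_card_fibres[OF finite_U])
  also have "\<dots> \<le> (\<Sum>k\<in>u ` B. real (card (U k)) * real CARD('c))"
    by (intro sum_mono mult_left_mono) (simp_all add: card_mono)
  also have "\<dots> = real CARD('c) * (\<Sum>k\<in>u ` B. real (card (U k)))"
    by (simp add: sum_distrib_left mult.commute)
  also have "(\<Sum>k\<in>u ` B. real (card (U k))) = real (card B)"
    using sum.image_gen[OF assms, of "\<lambda>_. 1 :: real" u] by (simp add: U_def)
  finally show ?thesis .
qed

definition prefix_fibre :: "nat \<Rightarrow> (bool list \<Rightarrow> bool list) \<Rightarrow> bool list \<Rightarrow> nat \<Rightarrow> bool list set" where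
  "prefix_fibre n f y i = {x \<in> bitstrings n. take i (f x) = take i y}"

lemma finite_bitstrings: "finite (bitstrings n)"
  unfolding bitstrings_def using finite_lists_length_eq[of "UNIV :: bool set" n] by simp

lemma card_bitstrings_pos: "0 < card (bitstrings n)"
proof -
  have "replicate n False \<in> bitstrings n"
    by (simp add: bitstrings_def)
  then show ?thesis
    using finite_bitstrings card_gt_0_iff by blast
qed

lemma finite_prefix_fibre: "finite (prefix_fibre n f y i)"
  unfolding prefix_fibre_def using finite_bitstrings by simp

lemma prefix_fibre_Suc:
  assumes "\<forall>x\<in>bitstrings n. f x \<in> bitstrings n" and "i < n" and "length y = n"
  shows "prefix_fibre n f y (Suc i) = {x \<in> prefix_fibre n f y i. f x ! i = y ! i}"
proof -
  have "take (Suc i) (f x) = take (Suc i) y \<longleftrightarrow> take i (f x) = take i y \<and> f x ! i = y ! i"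
    if "x \<in> bitstrings n" for x
    using assms that by (simp add: bitstrings_def take_Suc_conv_app_nth)
  then show ?thesis
    unfolding prefix_fibre_def by blast
qed

lemma A_star_prefix_fibre:
  "x \<in> prefix_fibre n f y k \<Longrightarrow> A_star n f x (Suc k) = spmf_of_set (prefix_fibre n f y k)"
  by (simp add: A_star_def prefix_fibre_def)

lemma sum_prefix_fibre_ratio_le:
  assumes maps: "\<forall>x\<in>bitstrings n. f x \<in> bitstrings n" and "i < n"
  shows "(\<Sum>x\<in>bitstrings n. real (card (prefix_fibre n f (f x) i)) / real (card (prefix_fibre n f (f x) (Suc i))))
    \<le> 2 * real (card (bitstrings n))"
proof -
  let ?B = "bitstrings n"
  have "prefix_fibre n f (f x) (Suc i) = {y \<in> ?B. take i (f y) = take i (f x) \<and> f y ! i = f x ! i}"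
    if "x \<in> ?B" for x
    using prefix_fibre_Suc[OF maps \<open>i < n\<close>, of "f x"] maps that
    by (auto simp: prefix_fibre_def bitstrings_def)
  then have "(\<Sum>x\<in>?B. real (card (prefix_fibre n f (f x) i)) / real (card (prefix_fibre n f (f x) (Suc i))))
      = (\<Sum>x\<in>?B. real (card {y \<in> ?B. take i (f y) = take i (f x)})
          / real (card {y \<in> ?B. take i (f y) = take i (f x) \<and> f y ! i = f x ! i}))"
    by (intro sum.cong) (simp_all add: prefix_fibre_def)
  also have "\<dots> \<le> real CARD(bool) * real (card ?B)"
    by (rule sum_card_fibre_ratio_le[OF finite_bitstrings])
  finally show ?thesis by simp
qed

lemma extend_one_A_star:
  assumes maps: "\<forall>x\<in>bitstrings n. f x \<in> bitstrings n" and x0: "x0 \<in> bitstrings n"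
    and "k < n" and x: "x \<in> prefix_fibre n f (f x0) k"
  defines "E \<equiv> extend_one f (A_star n f) x (f x0 ! k) (Suc k)"
  shows "lossless_spmf E" and "fst ` set_spmf E \<subseteq> prefix_fibre n f (f x0) (Suc k)"
    and "(\<integral>\<^sup>+r. ennreal (real (snd r)) \<partial>measure_spmf E)
      \<le> ennreal (real (card (prefix_fibre n f (f x0) k)) / real (card (prefix_fibre n f (f x0) (Suc k))))"
proof -
  let ?F = "prefix_fibre n f (f x0)"
  have extension: "?F (Suc k) = {x' \<in> ?F k. f x' ! k = f x0 ! k}"
    using maps x0 \<open>k < n\<close> by (intro prefix_fibre_Suc) (auto simp: bitstrings_def)
  have "x0 \<in> ?F (Suc k)"
    using x0 by (simp add: prefix_fibre_def)
  then have "card (?F (Suc k)) > 0"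
    using finite_prefix_fibre card_gt_0_iff by blast
  moreover have "card (?F k) > 0"
    using x finite_prefix_fibre card_gt_0_iff by blast
  moreover have success: "measure (measure_spmf (A_star n f x (Suc k))) {x'. f x' ! k = f x0 ! k}
      = real (card (?F (Suc k))) / real (card (?F k))"
    by (simp add: A_star_prefix_fibre[OF x] measure_spmf_of_set extension Int_def conj_commute)
  ultimately interpret retry_loop "A_star n f x (Suc k)" "\<lambda>x'. f x' ! (Suc k - 1) = f x0 ! k"
      "extend_loop f (A_star n f) x (f x0 ! k) (Suc k)"
    using x finite_prefix_fibre
    by (intro retry_loop_extend_loop) (auto simp: A_star_prefix_fibre[OF x])
  show "lossless_spmf E"
    using lossless_L by (simp add: E_def extend_one_def)
  show "fst ` set_spmf E \<subseteq> ?F (Suc k)"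
    using set_spmf_L[of 0] finite_prefix_fibre
    by (auto simp: E_def extend_one_def A_star_prefix_fibre[OF x] extension)
  show "(\<integral>\<^sup>+r. ennreal (real (snd r)) \<partial>measure_spmf E)
      \<le> ennreal (real (card (?F k)) / real (card (?F (Suc k))))"
    using nn_integral_count_le[of 0] by (simp add: E_def extend_one_def success)
qed

lemma inv_iter_A_star:
  assumes maps: "\<forall>x\<in>bitstrings n. f x \<in> bitstrings n" and x0: "x0 \<in> bitstrings n" and "k \<le> n"
  defines "I \<equiv> inv_iter n f (A_star n f) (f x0) k"
  shows "lossless_spmf I \<and> fst ` set_spmf I \<subseteq> prefix_fibre n f (f x0) k \<and>
    (\<integral>\<^sup>+r. ennreal (real (snd r)) \<partial>measure_spmf I)
      \<le> ennreal (\<Sum>i<k. real (card (prefix_fibre n f (f x0) i)) / real (card (prefix_fibre n f (f x0) (Suc i))))"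
  using \<open>k \<le> n\<close> unfolding I_def
proof (induction k)
  case 0
  have "prefix_fibre n f (f x0) 0 = bitstrings n"
    by (simp add: prefix_fibre_def)
  then show ?case
    using finite_bitstrings x0 by (auto simp: o_def)
next
  case (Suc k)
  let ?F = "prefix_fibre n f (f x0)"
  let ?I = "inv_iter n f (A_star n f) (f x0) k"
  let ?E = "\<lambda>x. extend_one f (A_star n f) x (f x0 ! k) (Suc k)"
  have "k < n" using Suc.prems by simp
  note IH = Suc.IH[OF Suc_leD[OF Suc.prems]] and E = extend_one_A_star[OF maps x0 \<open>k < n\<close>]
  have step: "inv_iter n f (A_star n f) (f x0) (Suc k) = bind_count ?I ?E"
    by (simp add: bind_count_def)
  have "(\<integral>\<^sup>+r. ennreal (real (snd r)) \<partial>measure_spmf (bind_count ?I ?E))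
      \<le> (\<integral>\<^sup>+r. ennreal (real (snd r)) \<partial>measure_spmf ?I)
        + ennreal (real (card (?F k)) / real (card (?F (Suc k))))"
    using IH E(3) by (intro nn_integral_bind_count_le) blast+
  also have "\<dots> \<le> ennreal (\<Sum>i<k. real (card (?F i)) / real (card (?F (Suc i))))
        + ennreal (real (card (?F k)) / real (card (?F (Suc k))))"
    using IH by (intro add_right_mono) blast
  also have "\<dots> = ennreal (\<Sum>i<Suc k. real (card (?F i)) / real (card (?F (Suc i))))"
    by (simp add: sum_nonneg flip: ennreal_plus)
  finally show ?case
    unfolding step using IH E(1,2) by (intro conjI lossless_bind_count set_bind_count_subset) blast+
qed

theorem lemma4p2:
  fixes n :: nat and f :: "bool list \<Rightarrow> bool list"
  assumes "\<forall>x \<in> bitstrings n. f x \<in> bitstrings n"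
  shows "lossless_spmf (inv_experiment n f) \<and>
         (\<integral>\<^sup>+ r. ennreal (real (snd r)) \<partial>measure_spmf (inv_experiment n f)) \<le> ennreal (2 * real n)"
proof
  let ?B = "bitstrings n"
  let ?run = "\<lambda>x. inv_iter n f (A_star n f) (f x) n"
  let ?ratio = "\<lambda>x i. real (card (prefix_fibre n f (f x) i)) / real (card (prefix_fibre n f (f x) (Suc i)))"
  have run: "lossless_spmf (?run x) \<and> (\<integral>\<^sup>+r. ennreal (real (snd r)) \<partial>measure_spmf (?run x)) \<le> ennreal (\<Sum>i<n. ?ratio x i)"
    if "x \<in> ?B" for x
    using inv_iter_A_star[OF assms that order.refl] by blast
  have unfold_experiment: "inv_experiment n f = bind_spmf (spmf_of_set ?B) ?run"
    by (simp add: inv_experiment_def inv_alg_def)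
  show "lossless_spmf (inv_experiment n f)"
    using run card_bitstrings_pos[of n] finite_bitstrings by (simp add: unfold_experiment card_gt_0_iff)
  have sum_ratio: "(\<Sum>x\<in>?B. \<Sum>i<n. ?ratio x i) \<le> 2 * real n * real (card ?B)"
    using sum_mono[of "{..<n}" "\<lambda>i. \<Sum>x\<in>?B. ?ratio x i" "\<lambda>_. 2 * real (card ?B)"]
      sum_prefix_fibre_ratio_le[OF assms] by (subst sum.swap) simp
  have "(\<integral>\<^sup>+ r. ennreal (real (snd r)) \<partial>measure_spmf (inv_experiment n f))
      = (\<Sum>x\<in>?B. \<integral>\<^sup>+r. ennreal (real (snd r)) \<partial>measure_spmf (?run x)) / card ?B"
    by (simp add: unfold_experiment nn_integral_bind_spmf nn_integral_spmf_of_set)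
  also have "\<dots> \<le> ennreal (\<Sum>x\<in>?B. \<Sum>i<n. ?ratio x i) / card ?B"
    using run by (auto intro!: divide_right_mono_ennreal sum_mono simp: sum_nonneg simp flip: sum_ennreal)
  also have "\<dots> \<le> ennreal (2 * real n * real (card ?B)) / card ?B"
    using sum_ratio by (intro divide_right_mono_ennreal ennreal_leI)
  also have "\<dots> = ennreal (2 * real n)"
    using card_bitstrings_pos[of n] by (simp add: ennreal_of_nat_eq_real_of_nat divide_ennreal)
  finally show "(\<integral>\<^sup>+ r. ennreal (real (snd r)) \<partial>measure_spmf (inv_experiment n f)) \<le> ennreal (2 * real n)" .
qed

end
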